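(* Let $PV_2=H\otimes\Bbbk[v]\cong\Bbbk[\partial,v]$, with $\lambda$-products defined on $\Bbbk[v]$ by $$(v^m{}_\lambda v^n)=v^{n+m},\qquad [v^m{}_\lambda v^n]=\big(m\partial+(n+m)\lambda\big)v^{n+m-1},\qquad n,m\ge0,$$ extended to $PV_2$ by sesquilinearity. Then $PV_2$ is a Poisson conformal algebra.
   Context: $\Bbbk$ is a field of characteristic $0$, $H=\Bbbk[\partial]$. A $\lambda$-product on an $H$-module $C$ is a $\Bbbk$-bilinear map $(x,y)\mapsto(x_\lambda y)=\sum_{n\ge0}\frac{\lambda^n}{n!}(x_{(n)}y)\in C[\lambda]$ satisfying sesquilinearity $(\partial x_\lambda y)=-\lambda(x_\lambda y)$, $(x_\lambda\partial y)=(\partial+\lambda)(x_\lambda y)$; $(x_{-\partial-\lambda}y)$ means $\sum_n\frac{(-\partial-\lambda)^n}{n!}(x_{(n)}y)$ with $\partial$ acting on coefficients. A Poisson conformal algebra is an $H$-module with two $\lambda$-products such that $(\cdot_\lambda\cdot)$ is associative, $(x_\lambda(y_\mu z))=((x_\lambda y)_{\lambda+\mu}z)$, and commutative, $(x_\lambda y)=(y_{-\partial-\lambda}x)$; $[\cdot_\lambda\cdot]$ satisfies $[x_\lambda y]=-[y_{-\partial-\lambda}x]$ and $[x_\lambda[y_\mu z]]-[y_\mu[x_\lambda z]]=[[x_\lambda y]_{\lambda+\mu}z]$; and $[x_\lambda(y_\mu z)]=([x_\lambda y]_{\lambda+\mu}z)+(y_\mu[x_\lambda z])$ for all $x,y,z$.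 *)

theory Defs
  imports "HOL-Computational_Algebra.Polynomial"
begin

text \<open>An H-module C (H = k[d]) is a type 'c carrying a k-vector
space structure given by the scalar action sc, and the action of d given by D.
Elements of C[lambda] are represented as 'c poly (lambda the variable).
Two-variable polynomials C[lambda,mu] are represented as 'c poly poly,
with outer variable mu and inner variable lambda.
The class comm_ring_1 on 'c is only used so that polynomial arithmetic over 'c
is available; the axioms below never multiply two elements of C.\<close>

definition H_module :: "('c::comm_ring_1 \<Rightarrow> 'c) \<Rightarrow> ('k::field \<Rightarrow> 'c \<Rightarrow> 'c) \<Rightarrow> bool" where
  "H_module D sc \<longleftrightarrow>
     (\<forall>a x y. sc a (x + y) = sc a x + sc a y) \<and>
     (\<forall>a b x. sc (a + b) x = sc a x + sc b x) \<and>
     (\<forall>a b x. sc (a * b) x = sc a (sc b x)) \<and>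
     (\<forall>x. sc 1 x = x) \<and>
     (\<forall>x y. D (x + y) = D x + D y) \<and>
     (\<forall>a x. D (sc a x) = sc a (D x))"

definition lambda_product ::
  "('c::comm_ring_1 \<Rightarrow> 'c) \<Rightarrow> ('k::field \<Rightarrow> 'c \<Rightarrow> 'c) \<Rightarrow> ('c \<Rightarrow> 'c \<Rightarrow> 'c poly) \<Rightarrow> bool" where
  "lambda_product D sc L \<longleftrightarrow>
     (\<forall>x y z. L (x + y) z = L x z + L y z) \<and>
     (\<forall>x y z. L x (y + z) = L x y + L x z) \<and>
     (\<forall>a x y. L (sc a x) y = map_poly (sc a) (L x y)) \<and>
     (\<forall>a x y. L x (sc a y) = map_poly (sc a) (L x y)) \<and>
     (\<forall>x y. L (D x) y = - pCons 0 (L x y)) \<and>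
     (\<forall>x y. L x (D y) = map_poly D (L x y) + pCons 0 (L x y))"

text \<open>(x_{-d-lambda} y): replace lambda^n c by (-d-lambda)^n c, d acting on coefficients.\<close>
definition flip_lam :: "('c::comm_ring_1 \<Rightarrow> 'c) \<Rightarrow> 'c poly \<Rightarrow> 'c poly" where
  "flip_lam D P = (\<Sum>n\<le>degree P. ((\<lambda>Q. - (map_poly D Q + pCons 0 Q)) ^^ n) [:coeff P n:])"

definition lamv :: "'c::comm_ring_1 poly poly" where "lamv = [:[:0, 1:]:]"
definition muv :: "'c::comm_ring_1 poly poly" where "muv = [:0, 1:]"

definition ev2 :: "'c::comm_ring_1 poly \<Rightarrow> 'c poly poly \<Rightarrow> 'c poly poly" where
  "ev2 P t = (\<Sum>k\<le>degree P. t ^ k * [:[:coeff P k:]:])"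

definition sub2 :: "('c::comm_ring_1 \<Rightarrow> 'c poly) \<Rightarrow> 'c poly \<Rightarrow> 'c poly poly \<Rightarrow> 'c poly poly \<Rightarrow> 'c poly poly" where
  "sub2 F P s t = (\<Sum>n\<le>degree P. s ^ n * ev2 (F (coeff P n)) t)"

text \<open>Poisson conformal algebra with commutative associative product L = (._lambda.)
and Lie bracket B = [._lambda.].\<close>
definition poisson_conformal_algebra ::
  "('c::comm_ring_1 \<Rightarrow> 'c) \<Rightarrow> ('k::field \<Rightarrow> 'c \<Rightarrow> 'c) \<Rightarrow> ('c \<Rightarrow> 'c \<Rightarrow> 'c poly) \<Rightarrow> ('c \<Rightarrow> 'c \<Rightarrow> 'c poly) \<Rightarrow> bool" where
  "poisson_conformal_algebra D sc L B \<longleftrightarrow>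
     H_module D sc \<and> lambda_product D sc L \<and> lambda_product D sc B \<and>
     \<comment> \<open>(x_lambda (y_mu z)) = ((x_lambda y)_{lambda+mu} z)\<close>
     (\<forall>x y z. sub2 (L x) (L y z) muv lamv = sub2 (\<lambda>a. L a z) (L x y) lamv (lamv + muv)) \<and>
     \<comment> \<open>(x_lambda y) = (y_{-d-lambda} x)\<close>
     (\<forall>x y. L x y = flip_lam D (L y x)) \<and>
     \<comment> \<open>[x_lambda y] = - [y_{-d-lambda} x]\<close>
     (\<forall>x y. B x y = - flip_lam D (B y x)) \<and>
     \<comment> \<open>[x_lambda [y_mu z]] - [y_mu [x_lambda z]] = [[x_lambda y]_{lambda+mu} z]\<close>
     (\<forall>x y z. sub2 (B x) (B y z) muv lamv - sub2 (B y) (B x z) lamv muv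
              = sub2 (\<lambda>a. B a z) (B x y) lamv (lamv + muv)) \<and>
     \<comment> \<open>[x_lambda (y_mu z)] = ([x_lambda y]_{lambda+mu} z) + (y_mu [x_lambda z])\<close>
     (\<forall>x y z. sub2 (B x) (L y z) muv lamv
              = sub2 (\<lambda>a. L a z) (B x y) lamv (lamv + muv) + sub2 (L y) (B x z) lamv muv)"

text \<open>The concrete algebra PV_2 = k[d,v], represented as 'k poly poly:
outer variable v, coefficients in k[d].\<close>

definition pv_D :: "'k::field poly poly \<Rightarrow> 'k poly poly" where
  "pv_D x = smult [:0, 1:] x"

definition pv_sc :: "'k::field \<Rightarrow> 'k poly poly \<Rightarrow> 'k poly poly" where
  "pv_sc a x = smult [:a:] x"

definition pv_d :: "'k::field poly poly" where "pv_d = [:[:0, 1:]:]"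
definition pv_v :: "'k::field poly poly" where "pv_v = [:0, 1:]"

definition pv_evalH :: "'k::field poly \<Rightarrow> 'k poly poly poly \<Rightarrow> 'k poly poly poly" where
  "pv_evalH p t = poly (map_poly (\<lambda>a. [:[:[:a:]:]:]) p) t"

text \<open>Extension by bilinearity and sesquilinearity:
(p(d) v^m _lambda q(d) v^n) = p(-lambda) q(d+lambda) (v^m _lambda v^n).\<close>
definition pv_assoc :: "'k::field poly poly \<Rightarrow> 'k poly poly \<Rightarrow> 'k poly poly poly" where
  "pv_assoc x y = (\<Sum>m\<le>degree x. \<Sum>n\<le>degree y.
      pv_evalH (coeff x m) (- [:0, 1:]) * pv_evalH (coeff y n) ([:pv_d:] + [:0, 1:])
      * [:pv_v ^ (n + m):])"

definition pv_bracket :: "'k::field poly poly \<Rightarrow> 'k poly poly \<Rightarrow> 'k poly poly poly" where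
  "pv_bracket x y = (\<Sum>m\<le>degree x. \<Sum>n\<le>degree y.
      pv_evalH (coeff x m) (- [:0, 1:]) * pv_evalH (coeff y n) ([:pv_d:] + [:0, 1:])
      * (([:of_nat m * pv_d:] + of_nat (n + m) * [:0, 1:]) * [:pv_v ^ (n + m - 1):]))"

end

theory Submission
  imports Defs
begin

text \<open>
  Write elements of \<open>PV\<^sub>2 = \<Bbbk>[\<partial>, v]\<close> as polynomials \<open>x(\<partial>, v)\<close> and let \<open>x\<^sub>v\<close> be the
  derivative in \<open>v\<close>. Summing the defining formulas over monomials gives the closed forms
  \<open>(x\<^sub>\<lambda> y) = x(-\<lambda>, v) y(\<partial>+\<lambda>, v)\<close> and
  \<open>[x\<^sub>\<lambda> y] = (\<partial>+\<lambda>) x\<^sub>v(-\<lambda>, v) y(\<partial>+\<lambda>, v) + \<lambda> x(-\<lambda>, v) y\<^sub>v(\<partial>+\<lambda>, v)\<close>.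
  All substitutions occurring in the axioms (\<open>\<lambda> \<mapsto> -\<partial>-\<lambda>\<close>, \<open>\<lambda> \<mapsto> \<lambda>+\<mu>\<close>, renaming \<open>\<lambda>\<close> to \<open>\<mu>\<close>)
  are ring homomorphisms, and composing them with a substitution \<open>\<partial> \<mapsto> \<alpha>\<close> again gives such a
  substitution; moreover \<open>\<partial>/\<partial>v\<close> is a derivation of both products. Hence after these
  substitutions both sides of each axiom are polynomials in values \<open>x(\<alpha>, v), x\<^sub>v(\<alpha>, v), \<dots>\<close>
  at arguments such as \<open>-\<lambda>, -\<mu>, \<partial>+\<lambda>+\<mu>\<close>, and each axiom reduces to an identity in a
  commutative ring.
\<close>

section \<open>Ring homomorphisms and polynomials\<close>

locale comm_ring_hom =
  fixes f :: "'a::comm_ring_1 \<Rightarrow> 'b::comm_ring_1"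
  assumes hom_add: "f (x + y) = f x + f y"
    and hom_mult: "f (x * y) = f x * f y"
    and hom_one: "f 1 = 1"
begin

lemma hom_zero: "f 0 = 0"
  using hom_add[of 0 0] by simp

lemma hom_uminus: "f (- x) = - f x"
  using hom_add[of x "- x"] by (simp add: hom_zero add_eq_0_iff)

lemma hom_of_nat: "f (of_nat n) = of_nat n"
  by (induction n) (simp_all add: hom_zero hom_one hom_add)

lemma hom_poly: "f (poly p x) = poly (map_poly f p) (f x)"
  by (induction p) (simp_all add: map_poly_pCons hom_zero hom_add hom_mult)

lemma map_poly_add: "map_poly f (p + q) = map_poly f p + map_poly f q"
  by (rule poly_eqI) (simp add: coeff_map_poly hom_zero hom_add)

lemma map_poly_mult: "map_poly f (p * q) = map_poly f p * map_poly f q"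
  by (induction p) (simp_all add: map_poly_add map_poly_smult map_poly_pCons hom_zero hom_mult)

lemma comm_ring_hom_map_poly: "comm_ring_hom (map_poly f)"
  by unfold_locales (simp_all add: map_poly_add map_poly_mult hom_one)

end

lemma map_poly_pderiv:
  fixes f :: "'a::idom \<Rightarrow> 'b::idom"
  assumes "comm_ring_hom f"
  shows "map_poly f (pderiv p) = pderiv (map_poly f p)"
  by (rule poly_eqI)
    (simp add: coeff_map_poly coeff_pderiv comm_ring_hom.hom_zero[OF assms]
      comm_ring_hom.hom_mult[OF assms] comm_ring_hom.hom_of_nat[OF assms] del: of_nat_Suc)

lemma comm_ring_hom_comp: "comm_ring_hom f \<Longrightarrow> comm_ring_hom g \<Longrightarrow> comm_ring_hom (\<lambda>x. f (g x))"
  by (simp add: comm_ring_hom_def)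

lemma comm_ring_hom_const_poly: "comm_ring_hom (\<lambda>x. [:x:])"
  by unfold_locales simp_all

lemma comm_ring_hom_const_poly2: "comm_ring_hom (\<lambda>c. [:[:c:]:])"
  by (rule comm_ring_hom_comp[OF comm_ring_hom_const_poly comm_ring_hom_const_poly])

lemma comm_ring_hom_poly: "comm_ring_hom (\<lambda>p. poly p x)"
  by unfold_locales simp_all

lemma comm_ring_hom_poly_map_poly:
  "comm_ring_hom f \<Longrightarrow> comm_ring_hom (\<lambda>p. poly (map_poly f p) x)"
  by (rule comm_ring_hom_comp[OF comm_ring_hom_poly comm_ring_hom.comm_ring_hom_map_poly])

lemma poly_altdef_le:
  fixes p :: "'a::comm_semiring_1 poly"
  assumes "degree p \<le> N"
  shows "poly p x = (\<Sum>i\<le>N. coeff p i * x ^ i)"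
  unfolding poly_altdef using assms
  by (intro sum.mono_neutral_left) (auto simp: coeff_eq_0)

lemma poly_pderiv_sum:
  fixes p :: "'a::idom poly"
  assumes "degree p \<le> N"
  shows "poly (pderiv p) x = (\<Sum>i\<le>N. of_nat i * coeff p i * x ^ (i - 1))"
proof -
  have "degree (pderiv p) \<le> N"
    using assms by (intro degree_le) (simp add: coeff_pderiv coeff_eq_0)
  then have "poly (pderiv p) x = (\<Sum>i\<le>N. of_nat (Suc i) * coeff p (Suc i) * x ^ i)"
    by (simp add: poly_altdef_le coeff_pderiv)
  also have "\<dots> = (\<Sum>i\<le>Suc N. of_nat i * coeff p i * x ^ (i - 1))"
    by (subst sum.atMost_Suc_shift) simp
  also have "\<dots> = (\<Sum>i\<le>N. of_nat i * coeff p i * x ^ (i - 1))"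
    using assms by (simp add: coeff_eq_0)
  finally show ?thesis .
qed

lemma map_poly_pderiv_add:
  "map_poly pderiv (P + Q) = map_poly pderiv P + map_poly pderiv (Q :: 'a::idom poly poly)"
  by (rule poly_eqI) (simp add: coeff_map_poly pderiv_add)

lemma map_poly_pderiv_mult:
  "map_poly pderiv (P * Q) = map_poly pderiv P * Q + P * map_poly pderiv (Q :: 'a::idom poly poly)"
proof (induction P)
  case (pCons a P)
  have "map_poly pderiv (smult a Q) = smult (pderiv a) Q + smult a (map_poly pderiv Q)"
    by (rule poly_eqI) (simp add: coeff_map_poly pderiv_mult algebra_simps)
  with pCons show ?case
    by (simp add: map_poly_pderiv_add map_poly_pCons algebra_simps)
qed simp

section \<open>Evaluating polynomials in two variables\<close>

text \<open>For \<open>r \<in> A[y][x]\<close>, \<open>poly2 e a b r\<close> is \<open>r(a, b)\<close>: the inner variable \<open>y\<close> goes to \<open>a\<close>,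
  the outer variable \<open>x\<close> to \<open>b\<close>, and coefficients are mapped by \<open>e\<close>.\<close>

definition poly2 :: "('a::comm_ring_1 \<Rightarrow> 'b::comm_ring_1) \<Rightarrow> 'b \<Rightarrow> 'b \<Rightarrow> 'a poly poly \<Rightarrow> 'b" where
  "poly2 e a b r = poly (map_poly (\<lambda>p. poly (map_poly e p) a) r) b"

lemma comm_ring_hom_poly2: "comm_ring_hom e \<Longrightarrow> comm_ring_hom (poly2 e a b)"
  unfolding poly2_def[abs_def]
  by (intro comm_ring_hom_poly_map_poly)

lemma hom_poly2:
  assumes h: "comm_ring_hom h" and e: "comm_ring_hom e"
  shows "h (poly2 e a b r) = poly2 (\<lambda>c. h (e c)) (h a) (h b) r"
proof -
  interpret h: comm_ring_hom h by (fact h)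
  interpret e: comm_ring_hom e by (fact e)
  show ?thesis
    unfolding poly2_def h.hom_poly
    by (simp add: map_poly_map_poly o_def h.hom_zero e.hom_zero h.hom_poly)
qed

lemma poly2_const: "comm_ring_hom e \<Longrightarrow> poly2 e a b [:[:c:]:] = e c"
  by (simp add: poly2_def map_poly_pCons comm_ring_hom.hom_zero)

lemma poly2_inner_var: "comm_ring_hom e \<Longrightarrow> poly2 e a b [:[:0, 1:]:] = a"
  by (simp add: poly2_def map_poly_pCons comm_ring_hom.hom_zero comm_ring_hom.hom_one)

lemma poly2_outer_var: "comm_ring_hom e \<Longrightarrow> poly2 e a b [:0, 1:] = b"
  by (simp add: poly2_def map_poly_pCons comm_ring_hom.hom_zero comm_ring_hom.hom_one)

lemma poly2_eq_sum:
  "comm_ring_hom e \<Longrightarrow> poly2 e a b r = (\<Sum>m\<le>degree r. poly (map_poly e (coeff r m)) a * b ^ m)"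
  unfolding poly2_def
  by (subst poly_altdef_le[OF map_poly_degree_leq]) (simp add: coeff_map_poly comm_ring_hom.hom_zero)

lemma poly2_pderiv_eq_sum:
  fixes e :: "'a::idom \<Rightarrow> 'b::idom"
  assumes e: "comm_ring_hom e"
  shows "poly2 e a b (pderiv r)
    = (\<Sum>m\<le>degree r. of_nat m * poly (map_poly e (coeff r m)) a * b ^ (m - 1))"
proof -
  have E: "comm_ring_hom (\<lambda>p. poly (map_poly e p) a)"
    by (rule comm_ring_hom_poly_map_poly[OF e])
  have "poly2 e a b (pderiv r) = poly (pderiv (map_poly (\<lambda>p. poly (map_poly e p) a) r)) b"
    unfolding poly2_def map_poly_pderiv[OF E] ..
  also have "\<dots> = (\<Sum>m\<le>degree r. of_nat m * poly (map_poly e (coeff r m)) a * b ^ (m - 1))"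
    by (subst poly_pderiv_sum[OF map_poly_degree_leq])
      (simp add: coeff_map_poly comm_ring_hom.hom_zero[OF E])
  finally show ?thesis .
qed

lemma derivation_poly2:
  fixes \<delta> :: "'b::comm_ring_1 \<Rightarrow> 'b" and e :: "'a::idom \<Rightarrow> 'b"
  assumes add: "\<And>x y. \<delta> (x + y) = \<delta> x + \<delta> y"
    and mult: "\<And>x y. \<delta> (x * y) = \<delta> x * y + x * \<delta> y"
    and e: "comm_ring_hom e" and \<delta>_e: "\<And>c. \<delta> (e c) = 0" and \<delta>_a: "\<delta> a = 0" and \<delta>_b: "\<delta> b = 1"
  shows "\<delta> (poly2 e a b r) = poly2 e a b (pderiv r)"
proof -
  have \<delta>_0: "\<delta> 0 = 0"
    using add[of 0 0] by simp
  show ?thesis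
  proof (induction r)
    case 0
    then show ?case by (simp add: poly2_def \<delta>_0)
  next
    case (pCons p r)
    have \<delta>_coeff: "\<delta> (poly (map_poly e p) a) = 0"
      by (induction p) (simp_all add: map_poly_pCons comm_ring_hom.hom_zero[OF e] add mult \<delta>_0 \<delta>_e \<delta>_a)
    have "poly2 e a b (pCons p r) = poly (map_poly e p) a + b * poly2 e a b r"
      by (simp add: poly2_def map_poly_pCons comm_ring_hom.hom_zero[OF e])
    moreover have "poly2 e a b (pderiv (pCons p r)) = poly2 e a b r + b * poly2 e a b (pderiv r)"
      using comm_ring_hom.hom_add[OF comm_ring_hom_poly2[OF e]]
      by (simp add: pderiv_pCons poly2_def map_poly_pCons comm_ring_hom.hom_zero[OF e])
    ultimately show ?case
      using pCons.IH by (simp add: add mult \<delta>_coeff \<delta>_b)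
  qed
qed

section \<open>The \<open>\<lambda>\<close>-products of \<open>PV\<^sub>2\<close> in closed form\<close>

text \<open>\<open>pv_subst \<iota> \<alpha> x\<close> is \<open>x(\<alpha>, v)\<close>, computed in a ring into which \<open>PV\<^sub>2\<close> is mapped by \<open>\<iota>\<close>;
  below \<open>\<iota>\<close> embeds \<open>PV\<^sub>2\<close> into \<open>PV\<^sub>2[\<lambda>]\<close> or \<open>PV\<^sub>2[\<lambda>, \<mu>]\<close> as constants.\<close>

definition pv_subst :: "('k::field poly poly \<Rightarrow> 'a::comm_ring_1) \<Rightarrow> 'a \<Rightarrow> 'k poly poly \<Rightarrow> 'a" where
  "pv_subst \<iota> \<alpha> x = poly2 (\<lambda>c. \<iota> [:[:c:]:]) \<alpha> (\<iota> pv_v) x"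

lemma comm_ring_hom_pv_const: "comm_ring_hom \<iota> \<Longrightarrow> comm_ring_hom (\<lambda>c. \<iota> [:[:c:]:])"
  by (rule comm_ring_hom_comp[OF _ comm_ring_hom_const_poly2])

lemma comm_ring_hom_pv_subst: "comm_ring_hom \<iota> \<Longrightarrow> comm_ring_hom (pv_subst \<iota> \<alpha>)"
  unfolding pv_subst_def[abs_def] by (intro comm_ring_hom_poly2 comm_ring_hom_pv_const)

lemma
  assumes "comm_ring_hom \<iota>"
  shows pv_subst_const: "pv_subst \<iota> \<alpha> [:[:c:]:] = \<iota> [:[:c:]:]"
    and pv_subst_d: "pv_subst \<iota> \<alpha> pv_d = \<alpha>"
    and pv_subst_v: "pv_subst \<iota> \<alpha> pv_v = \<iota> pv_v"
  using comm_ring_hom_pv_const[OF assms]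
  by (simp_all add: pv_subst_def pv_d_def pv_v_def poly2_const poly2_inner_var poly2_outer_var)

lemma pv_subst_pv_subst:
  assumes "comm_ring_hom \<iota>"
  shows "pv_subst (pv_subst \<iota> \<alpha>) \<beta> x = pv_subst \<iota> \<beta> x"
  unfolding pv_subst_def[of "pv_subst \<iota> \<alpha>"] pv_subst_const[OF assms] pv_subst_v[OF assms]
  by (simp only: pv_subst_def)

lemma hom_pv_subst:
  assumes "comm_ring_hom h" "comm_ring_hom \<iota>"
  shows "h (pv_subst \<iota> \<alpha> x) = pv_subst (\<lambda>c. h (\<iota> c)) (h \<alpha>) x"
  using assms comm_ring_hom_pv_const[OF assms(2)]
  unfolding pv_subst_def by (simp add: hom_poly2)

lemma poly_map_poly_pv_subst:
  assumes h: "comm_ring_hom h"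
  shows "poly (map_poly h (pv_subst (\<lambda>c. [:c:]) \<alpha> x)) s = pv_subst h (poly (map_poly h \<alpha>) s) x"
proof -
  have "(\<lambda>c. poly (map_poly h [:c:]) s) = h"
    by (simp add: map_poly_pCons comm_ring_hom.hom_zero[OF h])
  then show ?thesis
    using hom_pv_subst[OF comm_ring_hom_poly_map_poly[OF h] comm_ring_hom_const_poly] by simp
qed

lemma pv_subst_eq_sum:
  "pv_subst (\<lambda>c. [:c:]) \<alpha> x = (\<Sum>m\<le>degree x. pv_evalH (coeff x m) \<alpha> * [:pv_v:] ^ m)"
  unfolding pv_subst_def pv_evalH_def
  by (rule poly2_eq_sum[OF comm_ring_hom_pv_const[OF comm_ring_hom_const_poly]])

lemma pv_subst_pderiv_eq_sum:
  "pv_subst (\<lambda>c. [:c:]) \<alpha> (pderiv x)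
    = (\<Sum>m\<le>degree x. of_nat m * pv_evalH (coeff x m) \<alpha> * [:pv_v:] ^ (m - 1))"
  unfolding pv_subst_def pv_evalH_def
  by (rule poly2_pderiv_eq_sum[OF comm_ring_hom_pv_const[OF comm_ring_hom_const_poly]])

lemma pv_assoc_eq:
  "pv_assoc x y = pv_subst (\<lambda>c. [:c:]) (- [:0, 1:]) x * pv_subst (\<lambda>c. [:c:]) ([:pv_d:] + [:0, 1:]) y"
  unfolding pv_assoc_def pv_subst_eq_sum sum_product poly_const_pow[symmetric]
  by (intro sum.cong refl) (simp only: power_add mult_ac)

text \<open>The truncated exponent \<open>n + m - 1\<close> does no harm: when \<open>m = 0\<close> or \<open>n = 0\<close> the
  corresponding summand on the right vanishes.\<close>

lemma bracket_coefficient_split: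
  fixes u l w h g :: "'a::comm_ring_1"
  shows "h * g * ((of_nat m * u + of_nat (n + m) * l) * w ^ (n + m - 1))
    = (u + l) * (of_nat m * h * w ^ (m - 1) * (g * w ^ n)) + l * (h * w ^ m * (of_nat n * g * w ^ (n - 1)))"
proof (cases "m = 0 \<or> n = 0")
  case True
  then show ?thesis by (auto simp: algebra_simps)
next
  case False
  then have "w ^ (n + m - 1) = w ^ (m - 1) * w ^ n" "w ^ (n + m - 1) = w ^ m * w ^ (n - 1)"
    by (simp_all add: add.commute flip: power_add)
  then show ?thesis by (simp add: algebra_simps)
qed

lemma pv_bracket_eq:
  "pv_bracket x y
    = ([:pv_d:] + [:0, 1:]) * pv_subst (\<lambda>c. [:c:]) (- [:0, 1:]) (pderiv x) * pv_subst (\<lambda>c. [:c:]) ([:pv_d:] + [:0, 1:]) y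
      + [:0, 1:] * pv_subst (\<lambda>c. [:c:]) (- [:0, 1:]) x * pv_subst (\<lambda>c. [:c:]) ([:pv_d:] + [:0, 1:]) (pderiv y)"
  (is "_ = ?rhs")
proof -
  define h where "h m = pv_evalH (coeff x m) (- [:0, 1:])" for m
  define g where "g n = pv_evalH (coeff y n) ([:pv_d:] + [:0, 1:])" for n
  have of_nat_d: "[:of_nat m * pv_d:] = of_nat m * [:pv_d:]" for m :: nat
    by (simp add: of_nat_poly)
  have "pv_bracket x y = (\<Sum>m\<le>degree x. \<Sum>n\<le>degree y.
      ([:pv_d:] + [:0, 1:]) * (of_nat m * h m * [:pv_v:] ^ (m - 1) * (g n * [:pv_v:] ^ n))
      + [:0, 1:] * (h m * [:pv_v:] ^ m * (of_nat n * g n * [:pv_v:] ^ (n - 1))))"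
    unfolding pv_bracket_def h_def g_def of_nat_d poly_const_pow[symmetric]
    by (intro sum.cong refl) (simp only: bracket_coefficient_split)
  also have "\<dots> = (\<Sum>m\<le>degree x. \<Sum>n\<le>degree y.
      ([:pv_d:] + [:0, 1:]) * (of_nat m * h m * [:pv_v:] ^ (m - 1) * (g n * [:pv_v:] ^ n)))
      + (\<Sum>m\<le>degree x. \<Sum>n\<le>degree y.
      [:0, 1:] * (h m * [:pv_v:] ^ m * (of_nat n * g n * [:pv_v:] ^ (n - 1))))"
    by (simp only: sum.distrib)
  also have "\<dots> = ?rhs"
    unfolding pv_subst_pderiv_eq_sum h_def g_def unfolding pv_subst_eq_sum
    by (simp only: mult.assoc, simp only: sum_product, simp only: sum_distrib_left mult.assoc)
  finally show ?thesis .
qed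

lemma
  assumes h: "comm_ring_hom h"
  shows poly_map_poly_lam: "poly (map_poly h [:0, 1:]) s = s"
    and poly_map_poly_pv_d: "poly (map_poly h [:pv_d:]) s = h pv_d"
  by (simp_all add: map_poly_pCons comm_ring_hom.hom_zero[OF h] comm_ring_hom.hom_one[OF h])

lemma poly_map_poly_pv_assoc:
  assumes h: "comm_ring_hom h"
  shows "poly (map_poly h (pv_assoc x y)) s = pv_subst h (- s) x * pv_subst h (h pv_d + s) y"
proof -
  interpret E: comm_ring_hom "\<lambda>P. poly (map_poly h P) s"
    by (rule comm_ring_hom_poly_map_poly[OF h])
  show ?thesis
    unfolding pv_assoc_eq E.hom_mult poly_map_poly_pv_subst[OF h] E.hom_uminus E.hom_add
      poly_map_poly_lam[OF h] poly_map_poly_pv_d[OF h] ..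
qed

lemma poly_map_poly_pv_bracket:
  assumes h: "comm_ring_hom h"
  shows "poly (map_poly h (pv_bracket x y)) s
    = (h pv_d + s) * pv_subst h (- s) (pderiv x) * pv_subst h (h pv_d + s) y
      + s * pv_subst h (- s) x * pv_subst h (h pv_d + s) (pderiv y)"
proof -
  interpret E: comm_ring_hom "\<lambda>P. poly (map_poly h P) s"
    by (rule comm_ring_hom_poly_map_poly[OF h])
  show ?thesis
    unfolding pv_bracket_eq E.hom_add E.hom_mult poly_map_poly_pv_subst[OF h] E.hom_uminus
      poly_map_poly_lam[OF h] poly_map_poly_pv_d[OF h] ..
qed

lemma map_poly_pderiv_pv_subst:
  assumes "map_poly pderiv \<alpha> = 0"
  shows "map_poly pderiv (pv_subst (\<lambda>c. [:c:]) \<alpha> x) = pv_subst (\<lambda>c. [:c:]) \<alpha> (pderiv x)"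
  unfolding pv_subst_def
  by (rule derivation_poly2[OF map_poly_pderiv_add map_poly_pderiv_mult
        comm_ring_hom_pv_const[OF comm_ring_hom_const_poly]])
    (simp_all add: assms map_poly_pCons pv_v_def pderiv_pCons one_pCons[symmetric])

lemma
  shows map_poly_pderiv_neg_lam: "map_poly pderiv (- [:0, 1:] :: 'k::field poly poly poly) = 0"
    and map_poly_pderiv_d_plus_lam: "map_poly pderiv ([:pv_d:] + [:0, 1:] :: 'k::field poly poly poly) = 0"
  by (simp_all add: map_poly_pCons pv_d_def pderiv_minus)

lemma map_poly_pderiv_pv_assoc:
  "map_poly pderiv (pv_assoc x y) = pv_assoc (pderiv x) y + pv_assoc x (pderiv y)"
  unfolding pv_assoc_eq map_poly_pderiv_mult
    map_poly_pderiv_pv_subst[OF map_poly_pderiv_neg_lam] map_poly_pderiv_pv_subst[OF map_poly_pderiv_d_plus_lam]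
  by (simp add: algebra_simps)

lemma map_poly_pderiv_pv_bracket:
  "map_poly pderiv (pv_bracket x y) = pv_bracket (pderiv x) y + pv_bracket x (pderiv y)"
  unfolding pv_bracket_eq map_poly_pderiv_mult map_poly_pderiv_add
    map_poly_pderiv_pv_subst[OF map_poly_pderiv_neg_lam] map_poly_pderiv_pv_subst[OF map_poly_pderiv_d_plus_lam]
  by (simp add: map_poly_pCons pv_d_def algebra_simps)

section \<open>The axioms of a Poisson conformal algebra\<close>

lemma H_module_pv: "H_module (pv_D :: 'k::field poly poly \<Rightarrow> _) pv_sc"
proof -
  have "smult [:a + b:] x = smult [:a:] x + smult [:b:] x"
    and "smult [:a * b:] x = smult [:a:] (smult [:b:] x)"
    and "smult [:1:] x = x"
    and "smult [:0, 1:] (smult [:a:] x) = smult [:a:] (smult [:0, 1:] x)"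
    for a b :: 'k and x :: "'k poly poly"
    by (simp_all add: smult_add_left[symmetric] mult.commute one_pCons[symmetric])
  then show ?thesis
    unfolding H_module_def pv_D_def pv_sc_def by (simp add: smult_add_right)
qed

lemma
  shows pv_sc_eq_mult: "pv_sc a x = [:[:a:]:] * x"
    and pv_D_eq_mult: "pv_D x = pv_d * x"
  by (simp_all add: pv_sc_def pv_D_def pv_d_def)

lemma
  assumes "comm_ring_hom \<iota>"
  shows pv_subst_pv_sc: "pv_subst \<iota> \<alpha> (pv_sc a x) = \<iota> [:[:a:]:] * pv_subst \<iota> \<alpha> x"
    and pv_subst_pv_D: "pv_subst \<iota> \<alpha> (pv_D x) = \<alpha> * pv_subst \<iota> \<alpha> x"
  unfolding pv_sc_eq_mult pv_D_eq_mult comm_ring_hom.hom_mult[OF comm_ring_hom_pv_subst[OF assms]]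
    pv_subst_const[OF assms] pv_subst_d[OF assms] by (rule refl)+

lemma
  shows map_poly_pv_sc: "map_poly (pv_sc a) P = [:[:[:a:]:]:] * P"
    and map_poly_pv_D: "map_poly pv_D P = [:pv_d:] * P"
  by (simp_all add: poly_eq_iff coeff_map_poly pv_sc_def pv_D_def pv_d_def)

lemma lambda_product_pv_assoc: "lambda_product (pv_D :: 'k::field poly poly \<Rightarrow> _) pv_sc pv_assoc"
  unfolding lambda_product_def pv_assoc_eq map_poly_pv_sc map_poly_pv_D
    comm_ring_hom.hom_add[OF comm_ring_hom_pv_subst[OF comm_ring_hom_const_poly]]
    pv_subst_pv_sc[OF comm_ring_hom_const_poly] pv_subst_pv_D[OF comm_ring_hom_const_poly]
  by (simp add: algebra_simps)

lemma lambda_product_pv_bracket: "lambda_product (pv_D :: 'k::field poly poly \<Rightarrow> _) pv_sc pv_bracket"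
proof -
  have pderiv_pv_sc: "pderiv (pv_sc a x) = pv_sc a (pderiv x)"
    and pderiv_pv_D: "pderiv (pv_D x) = pv_D (pderiv x)" for a :: 'k and x :: "'k poly poly"
    by (simp_all add: pv_sc_def pv_D_def pderiv_smult)
  show ?thesis
    unfolding lambda_product_def pv_bracket_eq map_poly_pv_sc map_poly_pv_D pderiv_add
      pderiv_pv_sc pderiv_pv_D
      comm_ring_hom.hom_add[OF comm_ring_hom_pv_subst[OF comm_ring_hom_const_poly]]
      pv_subst_pv_sc[OF comm_ring_hom_const_poly] pv_subst_pv_D[OF comm_ring_hom_const_poly]
    by (simp add: algebra_simps smult_add_right)
qed

lemma flip_lam_pv_D: "flip_lam pv_D P = pcompose P (- ([:pv_d:] + [:0, 1:]))"
proof -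
  have iterate: "((\<lambda>Q. - (map_poly pv_D Q + pCons 0 Q)) ^^ n) Q = (- ([:pv_d:] + [:0, 1:])) ^ n * Q"
    for n and Q :: "'a poly poly poly"
    by (induction n) (simp_all add: map_poly_pv_D algebra_simps)
  show ?thesis
    unfolding flip_lam_def iterate pcompose_altdef
    by (subst poly_altdef_le[OF map_poly_degree_leq]) (simp add: coeff_map_poly mult.commute)
qed

lemma pv_assoc_commutative: "pv_assoc x y = flip_lam pv_D (pv_assoc y x)"
proof -
  have "[:pv_d:] + - ([:pv_d:] + [:0, 1:]) = - [:0, 1 :: 'a poly poly:]"
    by simp
  then show ?thesis
    unfolding flip_lam_pv_D pcompose_altdef poly_map_poly_pv_assoc[OF comm_ring_hom_const_poly] minus_minus
    unfolding pv_assoc_eq by (simp only: mult.commute)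
qed

lemma pv_bracket_skew: "pv_bracket x y = - flip_lam pv_D (pv_bracket y x)"
proof -
  have d_flip: "[:pv_d:] + - ([:pv_d:] + [:0, 1:]) = - [:0, 1 :: 'a poly poly:]"
    by simp
  show ?thesis
    unfolding flip_lam_pv_D pcompose_altdef poly_map_poly_pv_bracket[OF comm_ring_hom_const_poly] minus_minus d_flip
    unfolding pv_bracket_eq by algebra
qed

lemma ev2_eq_poly: "ev2 Q t = poly (map_poly (\<lambda>c. [:[:c:]:]) Q) t"
  unfolding ev2_def
  by (subst poly_altdef_le[OF map_poly_degree_leq]) (simp add: coeff_map_poly mult.commute)

lemma sub2_linear:
  assumes F: "\<And>c. ev2 (F c) t = K * g c + M * h c" and "g 0 = 0" "h 0 = 0"
  shows "sub2 F P s t = K * poly (map_poly g P) s + M * poly (map_poly h P) s"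
proof -
  have "sub2 F P s t = K * (\<Sum>n\<le>degree P. g (coeff P n) * s ^ n) + M * (\<Sum>n\<le>degree P. h (coeff P n) * s ^ n)"
    unfolding sub2_def F by (simp add: sum_distrib_left sum.distrib algebra_simps)
  then show ?thesis
    using assms(2,3) by (simp add: poly_altdef_le[OF map_poly_degree_leq] coeff_map_poly)
qed

lemma sub2_pv_assoc_left:
  "sub2 (pv_assoc x) P s t
    = pv_subst (\<lambda>c. [:[:c:]:]) (- t) x * poly (map_poly (pv_subst (\<lambda>c. [:[:c:]:]) ([:[:pv_d:]:] + t)) P) s"
proof -
  have "ev2 (pv_assoc x c) t
      = pv_subst (\<lambda>c. [:[:c:]:]) (- t) x * pv_subst (\<lambda>c. [:[:c:]:]) ([:[:pv_d:]:] + t) c + 0 * 0" for c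
    unfolding ev2_eq_poly poly_map_poly_pv_assoc[OF comm_ring_hom_const_poly2] by simp
  from sub2_linear[OF this] show ?thesis
    by (simp add: comm_ring_hom.hom_zero[OF comm_ring_hom_pv_subst[OF comm_ring_hom_const_poly2]])
qed

lemma sub2_pv_assoc_right:
  "sub2 (\<lambda>a. pv_assoc a z) P s t
    = pv_subst (\<lambda>c. [:[:c:]:]) ([:[:pv_d:]:] + t) z * poly (map_poly (pv_subst (\<lambda>c. [:[:c:]:]) (- t)) P) s"
proof -
  have "ev2 (pv_assoc c z) t
      = pv_subst (\<lambda>c. [:[:c:]:]) ([:[:pv_d:]:] + t) z * pv_subst (\<lambda>c. [:[:c:]:]) (- t) c + 0 * 0" for c
    unfolding ev2_eq_poly poly_map_poly_pv_assoc[OF comm_ring_hom_const_poly2] by (simp add: mult.commute)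
  from sub2_linear[OF this] show ?thesis
    by (simp add: comm_ring_hom.hom_zero[OF comm_ring_hom_pv_subst[OF comm_ring_hom_const_poly2]])
qed

lemma sub2_pv_bracket_left:
  "sub2 (pv_bracket x) P s t
    = ([:[:pv_d:]:] + t) * pv_subst (\<lambda>c. [:[:c:]:]) (- t) (pderiv x)
        * poly (map_poly (pv_subst (\<lambda>c. [:[:c:]:]) ([:[:pv_d:]:] + t)) P) s
      + t * pv_subst (\<lambda>c. [:[:c:]:]) (- t) x
        * poly (map_poly (pv_subst (\<lambda>c. [:[:c:]:]) ([:[:pv_d:]:] + t)) (map_poly pderiv P)) s"
proof -
  have "ev2 (pv_bracket x c) t
      = (([:[:pv_d:]:] + t) * pv_subst (\<lambda>c. [:[:c:]:]) (- t) (pderiv x)) * pv_subst (\<lambda>c. [:[:c:]:]) ([:[:pv_d:]:] + t) c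
        + (t * pv_subst (\<lambda>c. [:[:c:]:]) (- t) x) * pv_subst (\<lambda>c. [:[:c:]:]) ([:[:pv_d:]:] + t) (pderiv c)" for c
    unfolding ev2_eq_poly poly_map_poly_pv_bracket[OF comm_ring_hom_const_poly2] by simp
  from sub2_linear[OF this] show ?thesis
    by (simp add: comm_ring_hom.hom_zero[OF comm_ring_hom_pv_subst[OF comm_ring_hom_const_poly2]]
        map_poly_map_poly o_def)
qed

lemma sub2_pv_bracket_right:
  "sub2 (\<lambda>a. pv_bracket a z) P s t
    = ([:[:pv_d:]:] + t) * pv_subst (\<lambda>c. [:[:c:]:]) ([:[:pv_d:]:] + t) z
        * poly (map_poly (pv_subst (\<lambda>c. [:[:c:]:]) (- t)) (map_poly pderiv P)) s
      + t * pv_subst (\<lambda>c. [:[:c:]:]) ([:[:pv_d:]:] + t) (pderiv z)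
        * poly (map_poly (pv_subst (\<lambda>c. [:[:c:]:]) (- t)) P) s"
proof -
  have "ev2 (pv_bracket c z) t
      = (([:[:pv_d:]:] + t) * pv_subst (\<lambda>c. [:[:c:]:]) ([:[:pv_d:]:] + t) z) * pv_subst (\<lambda>c. [:[:c:]:]) (- t) (pderiv c)
        + (t * pv_subst (\<lambda>c. [:[:c:]:]) ([:[:pv_d:]:] + t) (pderiv z)) * pv_subst (\<lambda>c. [:[:c:]:]) (- t) c" for c
    unfolding ev2_eq_poly poly_map_poly_pv_bracket[OF comm_ring_hom_const_poly2] by (simp add: mult_ac)
  from sub2_linear[OF this] show ?thesis
    by (simp add: comm_ring_hom.hom_zero[OF comm_ring_hom_pv_subst[OF comm_ring_hom_const_poly2]]
        map_poly_map_poly o_def)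
qed

lemma poly_map_poly_pv_subst_pv_assoc:
  assumes \<iota>: "comm_ring_hom \<iota>"
  shows "poly (map_poly (pv_subst \<iota> \<gamma>) (pv_assoc y z)) s = pv_subst \<iota> (- s) y * pv_subst \<iota> (\<gamma> + s) z"
  unfolding poly_map_poly_pv_assoc[OF comm_ring_hom_pv_subst[OF \<iota>]] pv_subst_pv_subst[OF \<iota>] pv_subst_d[OF \<iota>] ..

lemma poly_map_poly_pv_subst_pv_bracket:
  assumes \<iota>: "comm_ring_hom \<iota>"
  shows "poly (map_poly (pv_subst \<iota> \<gamma>) (pv_bracket y z)) s
    = (\<gamma> + s) * pv_subst \<iota> (- s) (pderiv y) * pv_subst \<iota> (\<gamma> + s) z
      + s * pv_subst \<iota> (- s) y * pv_subst \<iota> (\<gamma> + s) (pderiv z)"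
  unfolding poly_map_poly_pv_bracket[OF comm_ring_hom_pv_subst[OF \<iota>]] pv_subst_pv_subst[OF \<iota>] pv_subst_d[OF \<iota>] ..

lemma
  shows d_lamv_muv_assoc: "[:[:pv_d:]:] + lamv + muv = [:[:pv_d:]:] + (lamv + muv)"
    and d_muv_lamv_commute: "[:[:pv_d:]:] + muv + lamv = [:[:pv_d:]:] + (lamv + muv)"
    and neg_d_lamv_muv_assoc: "- (lamv + muv) + lamv = - muv"
  by (simp_all add: algebra_simps)

lemma pv_assoc_associative:
  "sub2 (pv_assoc x) (pv_assoc y z) muv lamv = sub2 (\<lambda>a. pv_assoc a z) (pv_assoc x y) lamv (lamv + muv)"
  unfolding sub2_pv_assoc_left sub2_pv_assoc_right poly_map_poly_pv_subst_pv_assoc[OF comm_ring_hom_const_poly2]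
    d_lamv_muv_assoc neg_d_lamv_muv_assoc
  by (simp only: mult_ac)

lemma pv_bracket_jacobi:
  "sub2 (pv_bracket x) (pv_bracket y z) muv lamv - sub2 (pv_bracket y) (pv_bracket x z) lamv muv
    = sub2 (\<lambda>a. pv_bracket a z) (pv_bracket x y) lamv (lamv + muv)"
  unfolding sub2_pv_bracket_left sub2_pv_bracket_right map_poly_pderiv_pv_bracket
    comm_ring_hom.hom_add[OF comm_ring_hom_poly_map_poly[OF comm_ring_hom_pv_subst[OF comm_ring_hom_const_poly2]]]
    poly_map_poly_pv_subst_pv_bracket[OF comm_ring_hom_const_poly2] d_lamv_muv_assoc d_muv_lamv_commute neg_d_lamv_muv_assoc
  by algebra

lemma pv_bracket_leibniz:
  "sub2 (pv_bracket x) (pv_assoc y z) muv lamv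
    = sub2 (\<lambda>a. pv_assoc a z) (pv_bracket x y) lamv (lamv + muv) + sub2 (pv_assoc y) (pv_bracket x z) lamv muv"
  unfolding sub2_pv_bracket_left sub2_pv_assoc_left sub2_pv_assoc_right map_poly_pderiv_pv_assoc
    comm_ring_hom.hom_add[OF comm_ring_hom_poly_map_poly[OF comm_ring_hom_pv_subst[OF comm_ring_hom_const_poly2]]]
    poly_map_poly_pv_subst_pv_assoc[OF comm_ring_hom_const_poly2] poly_map_poly_pv_subst_pv_bracket[OF comm_ring_hom_const_poly2]
    d_lamv_muv_assoc d_muv_lamv_commute neg_d_lamv_muv_assoc
  by algebra

theorem mainTheorem7:
  shows "poisson_conformal_algebra (pv_D :: 'k::field_char_0 poly poly \<Rightarrow> _) pv_sc pv_assoc pv_bracket"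
  unfolding poisson_conformal_algebra_def
  using H_module_pv lambda_product_pv_assoc lambda_product_pv_bracket pv_assoc_commutative
    pv_bracket_skew pv_assoc_associative pv_bracket_jacobi pv_bracket_leibniz
  by blast

end
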